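(* Let $\sigma^2>0$, $x_2>0$, $x\ge0$, and $a_1,a_2\in(0,1)$ with $a_1+a_2=1$, and define $\alpha,\beta,J(x)$ as in the context. Then (for every value $\beta>0$, in particular including $\beta\ge1$) $$J(x) = -\frac{x^2+\sigma^2}{x_2^2+\sigma^2} + \log\frac{a_2}{x_2^2+\sigma^2} + \log\bigl(1+\beta^{-1}\bigr) - \frac{\alpha\beta^{-1}}{\alpha+1}\, {}_2F_1\!\left(1, \tfrac{\alpha+1}{\alpha}; \tfrac{2\alpha+1}{\alpha}; -\beta^{-1}\right).$$
   Context: Logarithms are natural. Set $$\alpha = \frac{x_2^2}{x_2^2+\sigma^2}\cdot\frac{x^2+\sigma^2}{\sigma^2}, \qquad \beta = \frac{a_2}{a_1}\cdot\frac{\sigma^2}{x_2^2+\sigma^2},$$ both strictly positive, and $$J(x) = \int_0^\infty \frac{2y}{x^2+\sigma^2}\, e^{-y^2/(x^2+\sigma^2)} \log\!\left( \frac{a_1}{\sigma^2} e^{-y^2/\sigma^2} + \frac{a_2}{x_2^2+\sigma^2} e^{-y^2/(x_2^2+\sigma^2)} \right) dy.$$ ${}_2F_1(\xi_1,\xi_2;\eta_1;z)$ denotes the Gauss hypergeometric function: for $|z|<1$ it equals $\sum_{k\ge0}\frac{(\xi_1)_k(\xi_2)_k}{(\eta_1)_k}\frac{z^k}{k!}$ with $(a)_k=a(a+1)\cdots(a+k-1)$, and it is extended to $z\in\mathbb{C}\setminus(1,\infty)$ by analytic continuation. *)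

theory Defs
  imports "HOL-Complex_Analysis.Complex_Analysis"
begin

text \<open>Gauss hypergeometric series (valid for norm z < 1).\<close>
definition hyp2F1_series :: "complex \<Rightarrow> complex \<Rightarrow> complex \<Rightarrow> complex \<Rightarrow> complex" where
  "hyp2F1_series a b c z =
     (\<Sum>k. pochhammer a k * pochhammer b k / pochhammer c k * z ^ k / of_nat (fact k))"

definition slit_plane :: "complex set" where
  "slit_plane = - {complex_of_real t | t. t \<ge> 1}"

definition hyp2F1 :: "complex \<Rightarrow> complex \<Rightarrow> complex \<Rightarrow> complex \<Rightarrow> complex" where
  "hyp2F1 a b c z =
     (THE w. \<exists>f. f holomorphic_on slit_plane \<and>
                 (\<forall>u. norm u < 1 \<longrightarrow> f u = hyp2F1_series a b c u) \<and> f z = w)"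

definition J_fun :: "real \<Rightarrow> real \<Rightarrow> real \<Rightarrow> real \<Rightarrow> real \<Rightarrow> real" where
  "J_fun \<sigma>2 a1 a2 x2 x =
     (LBINT y:{0..}. 2 * y / (x\<^sup>2 + \<sigma>2) * exp (- y\<^sup>2 / (x\<^sup>2 + \<sigma>2)) *
        ln (a1 / \<sigma>2 * exp (- y\<^sup>2 / \<sigma>2) + a2 / (x2\<^sup>2 + \<sigma>2) * exp (- y\<^sup>2 / (x2\<^sup>2 + \<sigma>2))))"

end

theory Submission
  imports Defs "HOL-Real_Asymp.Real_Asymp"
begin

text \<open>Put \<open>s = x\<^sup>2 + \<sigma>\<^sup>2\<close>, \<open>t = x\<^sub>2\<^sup>2 + \<sigma>\<^sup>2\<close> and \<open>c = 1/\<beta>\<close>. The mixture inside the logarithm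
  factors as \<open>(a\<^sub>2/t) exp (-y\<^sup>2/t) (1 + c exp (-\<alpha> y\<^sup>2/s))\<close>, so the first two factors only
  contribute the mass and the second moment of the Rayleigh weight \<open>(2y/s) exp (-y\<^sup>2/s)\<close>. For the
  third, integration by parts and the substitution \<open>v = exp (-\<alpha> y\<^sup>2/s)\<close> give
  \<open>ln (1 + c) - c \<integral>\<^sub>0\<^sup>1 v\<^sup>1\<^sup>/\<^sup>\<alpha> / (1 + c v) dv\<close>. This is Euler's integral for
  \<open>\<^sub>2F\<^sub>1(1, b; b + 1; -c)\<close> with \<open>b = 1 + 1/\<alpha>\<close>: on the unit disc one integrates the geometric
  series of the kernel termwise, and at \<open>-c\<close>, which lies outside the disc when \<open>\<beta> \<le> 1\<close>, one
  uses analytic continuation, the integral being holomorphic off the ray \<open>[1, \<infinity>)\<close>.\<close>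

lemma set_integral_Ici_0_FTC_nonneg:
  fixes f F :: "real \<Rightarrow> real"
  assumes "\<And>y. 0 < y \<Longrightarrow> (F has_real_derivative f y) (at y)"
    and "\<And>y. 0 < y \<Longrightarrow> isCont f y"
    and "\<And>y. 0 < y \<Longrightarrow> 0 \<le> f y"
    and "(F \<longlongrightarrow> A) (at_right 0)" and "(F \<longlongrightarrow> B) at_top"
  shows "set_integrable lborel {0..} f" and "(LBINT y:{0..}. f y) = B - A"
proof -
  have Ioi: "set_integrable lborel (einterval 0 \<infinity>) f" "(LBINT y=0..\<infinity>. f y) = B - A"
    by (rule interval_integral_FTC_nonneg[where F=F];
        use assms in \<open>auto simp: zero_ereal_def ereal_tendsto_simps\<close>)+
  have "set_integrable lborel {0..} f \<longleftrightarrow> set_integrable lborel {0<..} f"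
    by (rule set_integrable_discrete_difference[where X="{0}"]) auto
  then show "set_integrable lborel {0..} f"
    using Ioi(1) by (simp add: zero_ereal_def)
  have "(LBINT y:{0..}. f y) = (LBINT y:{0<..}. f y)"
    by (rule set_integral_discrete_difference[where X="{0}"]) auto
  then show "(LBINT y:{0..}. f y) = B - A"
    using Ioi(2) by (simp add: zero_ereal_def interval_integral_Ioi)
qed

text \<open>With \<open>s = 2\<sigma>\<^sup>2\<close> this is the Rayleigh density of scale \<open>\<sigma>\<close>.\<close>
definition rayleigh_density :: "real \<Rightarrow> real \<Rightarrow> real" where
  "rayleigh_density s y = 2 * y / s * exp (- y\<^sup>2 / s)"

lemma rayleigh_density_nonneg: "s > 0 \<Longrightarrow> y \<ge> 0 \<Longrightarrow> rayleigh_density s y \<ge> 0"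
  by (simp add: rayleigh_density_def)

lemma isCont_rayleigh_density: "s > 0 \<Longrightarrow> isCont (rayleigh_density s) y"
  unfolding rayleigh_density_def by (intro continuous_intros) auto

lemma rayleigh_density_integral:
  assumes "s > 0"
  shows "set_integrable lborel {0..} (rayleigh_density s)"
    and "(LBINT y:{0..}. rayleigh_density s y) = 1"
proof -
  have "((\<lambda>y. - exp (- y\<^sup>2 / s)) has_real_derivative rayleigh_density s y) (at y)" for y
    unfolding rayleigh_density_def using assms
    by (auto intro!: derivative_eq_intros simp: field_simps power2_eq_square)
  moreover have "((\<lambda>y. - exp (- y\<^sup>2 / s)) \<longlongrightarrow> -1) (at_right 0)"
    using assms by (auto intro!: tendsto_eq_intros)
  moreover have "((\<lambda>y. - exp (- y\<^sup>2 / s)) \<longlongrightarrow> 0) at_top"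
    using assms by real_asymp
  ultimately show "set_integrable lborel {0..} (rayleigh_density s)"
    and "(LBINT y:{0..}. rayleigh_density s y) = 1"
    using set_integral_Ici_0_FTC_nonneg[of "\<lambda>y. - exp (- y\<^sup>2 / s)" "rayleigh_density s"]
      isCont_rayleigh_density rayleigh_density_nonneg assms by auto
qed

lemma rayleigh_second_moment:
  assumes "s > 0"
  shows "set_integrable lborel {0..} (\<lambda>y. rayleigh_density s y * y\<^sup>2)"
    and "(LBINT y:{0..}. rayleigh_density s y * y\<^sup>2) = s"
proof -
  have "((\<lambda>y. - ((y\<^sup>2 + s) * exp (- y\<^sup>2 / s))) has_real_derivative rayleigh_density s y * y\<^sup>2) (at y)" for y
    unfolding rayleigh_density_def using assms
    by (auto intro!: derivative_eq_intros simp: field_simps power2_eq_square)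
  moreover have "((\<lambda>y. - ((y\<^sup>2 + s) * exp (- y\<^sup>2 / s))) \<longlongrightarrow> -s) (at_right 0)"
    using assms by (auto intro!: tendsto_eq_intros)
  moreover have "((\<lambda>y. - ((y\<^sup>2 + s) * exp (- y\<^sup>2 / s))) \<longlongrightarrow> 0) at_top"
    using assms by real_asymp
  moreover have "isCont (\<lambda>y. rayleigh_density s y * y\<^sup>2) y" for y
    using isCont_rayleigh_density[OF assms] by (intro continuous_intros)
  ultimately show "set_integrable lborel {0..} (\<lambda>y. rayleigh_density s y * y\<^sup>2)"
    and "(LBINT y:{0..}. rayleigh_density s y * y\<^sup>2) = s"
    using set_integral_Ici_0_FTC_nonneg[of "\<lambda>y. - ((y\<^sup>2 + s) * exp (- y\<^sup>2 / s))"
        "\<lambda>y. rayleigh_density s y * y\<^sup>2"] rayleigh_density_nonneg assms by auto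
qed

lemma continuous_on_powr_const:
  "p > 0 \<Longrightarrow> continuous_on {0..b} (\<lambda>v::real. v powr p)"
  by (rule continuous_on_powr'[OF continuous_on_id continuous_on_const]) auto

lemma continuous_on_powr_div_one_plus_mult:
  assumes "p > 0" "c \<ge> 0"
  shows "continuous_on {0..b} (\<lambda>v::real. v powr p / (1 + c * v))"
  using assms by (intro continuous_on_divide continuous_on_powr_const continuous_intros)
    (auto, smt (verit) mult_nonneg_nonneg)

text \<open>Integration by parts followed by the substitution \<open>v = exp (-\<alpha> y\<^sup>2 / s)\<close>, packaged
  as an explicit antiderivative.\<close>
lemma rayleigh_ln_one_plus_antiderivative:
  fixes s c \<alpha> y :: real
  assumes "s > 0" "c > 0" "\<alpha> > 0" "y > 0"
  defines "q \<equiv> \<lambda>v. v powr (1/\<alpha>) / (1 + c * v)"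
  shows "((\<lambda>y. c * integral {0..exp (-\<alpha> * y\<^sup>2 / s)} q - exp (- y\<^sup>2 / s) * ln (1 + c * exp (-\<alpha> * y\<^sup>2 / s)))
           has_real_derivative rayleigh_density s y * ln (1 + c * exp (-\<alpha> * y\<^sup>2 / s))) (at y)"
proof -
  define w where "w = exp (-\<alpha> * y\<^sup>2 / s)"
  have w: "0 < w" "w < 1"
    using assms by (auto simp: w_def)
  have w_powr: "w powr (1/\<alpha>) = exp (- y\<^sup>2 / s)"
    using assms by (simp add: w_def powr_def)
  have q_cont: "continuous_on {0..1} q"
    unfolding q_def using assms by (intro continuous_on_powr_div_one_plus_mult) auto
  have "((\<lambda>w. integral {0..w} q) has_real_derivative q w) (at w)"
    using integral_has_real_derivative[OF q_cont, of w] w by (simp add: at_within_Icc_at)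
  moreover have "((\<lambda>y. exp (-\<alpha> * y\<^sup>2 / s)) has_real_derivative - 2 * \<alpha> * y / s * w) (at y)"
    unfolding w_def using assms by (auto intro!: derivative_eq_intros simp: field_simps)
  ultimately have chain: "((\<lambda>y. integral {0..exp (-\<alpha> * y\<^sup>2 / s)} q)
      has_real_derivative q w * (- 2 * \<alpha> * y / s * w)) (at y)"
    unfolding w_def by (rule DERIV_chain2)
  have pos: "1 + c * w > 0"
    using w assms by (simp add: add_pos_pos)
  have "((\<lambda>y. exp (- y\<^sup>2 / s) * ln (1 + c * exp (-\<alpha> * y\<^sup>2 / s))) has_real_derivative
      - 2 * y / s * exp (- y\<^sup>2 / s) * ln (1 + c * w)
      - exp (- y\<^sup>2 / s) * (2 * \<alpha> * y / s * c * w / (1 + c * w))) (at y)"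
    using pos assms unfolding w_def by (auto intro!: derivative_eq_intros simp: field_simps)
  from DERIV_diff[OF DERIV_cmult[OF chain] this, of c]
  have "((\<lambda>y. c * integral {0..exp (-\<alpha> * y\<^sup>2 / s)} q - exp (- y\<^sup>2 / s) * ln (1 + c * exp (-\<alpha> * y\<^sup>2 / s)))
      has_real_derivative c * (q w * (- 2 * \<alpha> * y / s * w))
        - (- 2 * y / s * exp (- y\<^sup>2 / s) * ln (1 + c * w)
           - exp (- y\<^sup>2 / s) * (2 * \<alpha> * y / s * c * w / (1 + c * w)))) (at y)" .
  also have "c * (q w * (- 2 * \<alpha> * y / s * w))
        - (- 2 * y / s * exp (- y\<^sup>2 / s) * ln (1 + c * w)
           - exp (- y\<^sup>2 / s) * (2 * \<alpha> * y / s * c * w / (1 + c * w)))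
      = rayleigh_density s y * ln (1 + c * exp (-\<alpha> * y\<^sup>2 / s))"
    using pos assms unfolding q_def w_powr rayleigh_density_def
    by (simp add: w_def field_simps)
  finally show ?thesis .
qed

lemma rayleigh_ln_one_plus_integral:
  fixes s c \<alpha> :: real
  assumes "s > 0" "c > 0" "\<alpha> > 0"
  defines "f \<equiv> \<lambda>y. rayleigh_density s y * ln (1 + c * exp (-\<alpha> * y\<^sup>2 / s))"
  shows "set_integrable lborel {0..} f"
    and "(LBINT y:{0..}. f y) = ln (1 + c) - c * integral {0..1} (\<lambda>v. v powr (1/\<alpha>) / (1 + c * v))"
proof -
  define q where "q = (\<lambda>v::real. v powr (1/\<alpha>) / (1 + c * v))"
  define Q where "Q = (\<lambda>w. integral {0..w} q)"
  define w where "w = (\<lambda>y::real. exp (-\<alpha> * y\<^sup>2 / s))"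
  have "continuous_on {0..2} q"
    unfolding q_def using assms by (intro continuous_on_powr_div_one_plus_mult) auto
  then have Q_cont: "continuous_on {0..2} Q"
    unfolding Q_def by (intro indefinite_integral_continuous_1 integrable_continuous_real)
  have "isCont Q 1"
    using continuous_on_interior[OF Q_cont] by (simp add: interior_atLeastAtMost_real)
  moreover have "(w \<longlongrightarrow> 1) (at_right 0)"
    unfolding w_def using assms by (auto intro!: tendsto_eq_intros)
  ultimately have lim_0: "((\<lambda>y. c * Q (w y) - exp (- y\<^sup>2 / s) * ln (1 + c * w y))
      \<longlongrightarrow> c * Q 1 - 1 * ln (1 + c * 1)) (at_right 0)"
    using assms by (intro tendsto_intros isCont_tendsto_compose[of _ Q]) (auto intro!: tendsto_eq_intros)
  have "(Q \<longlongrightarrow> Q 0) (at 0 within {0..2})"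
    using Q_cont by (simp add: continuous_on_def)
  then have Q_lim_0: "(Q \<longlongrightarrow> 0) (at_right 0)"
    by (simp add: at_within_Icc_at_right Q_def)
  have w_lim_top: "(w \<longlongrightarrow> 0) at_top"
    unfolding w_def using assms by real_asymp
  then have "filterlim w (at_right 0) at_top"
    by (rule tendsto_imp_filterlim_at_right) (simp add: w_def)
  moreover have "((\<lambda>y. exp (- y\<^sup>2 / s)) \<longlongrightarrow> 0) at_top"
    using assms by real_asymp
  ultimately have lim_top: "((\<lambda>y. c * Q (w y) - exp (- y\<^sup>2 / s) * ln (1 + c * w y))
      \<longlongrightarrow> c * 0 - 0 * ln (1 + c * 0)) at_top"
    by (intro tendsto_intros filterlim_compose[OF Q_lim_0] w_lim_top) auto
  have "isCont f y" for y
    unfolding f_def using assms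
    by (intro continuous_intros isCont_rayleigh_density) (auto, smt (verit) exp_gt_zero mult_pos_pos)
  moreover have "0 \<le> f y" if "y > 0" for y
    unfolding f_def using assms that
    by (intro mult_nonneg_nonneg rayleigh_density_nonneg ln_ge_zero) auto
  moreover have "((\<lambda>y. c * Q (w y) - exp (- y\<^sup>2 / s) * ln (1 + c * w y)) has_real_derivative f y) (at y)"
    if "y > 0" for y
    using rayleigh_ln_one_plus_antiderivative[OF assms(1-3) that] by (simp add: Q_def q_def w_def f_def)
  ultimately show "set_integrable lborel {0..} f"
    and "(LBINT y:{0..}. f y) = ln (1 + c) - c * integral {0..1} q"
    using set_integral_Ici_0_FTC_nonneg[OF _ _ _ lim_0 lim_top] by (simp_all add: Q_def)
qed

lemma ln_two_gaussian_mixture: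
  fixes a1 a2 r t y :: real
  assumes "a1 > 0" "a2 > 0" "r > 0" "t > 0"
  shows "ln (a1 / r * exp (- y\<^sup>2 / r) + a2 / t * exp (- y\<^sup>2 / t))
       = ln (a2 / t) - y\<^sup>2 / t + ln (1 + a1 * t / (a2 * r) * exp (- (1/r - 1/t) * y\<^sup>2))"
proof -
  have "exp (- y\<^sup>2 / r) = exp (- y\<^sup>2 / t) * exp (- (1/r - 1/t) * y\<^sup>2)"
    by (simp add: exp_add[symmetric] field_simps)
  then have mixture: "a1 / r * exp (- y\<^sup>2 / r) + a2 / t * exp (- y\<^sup>2 / t)
      = a2 / t * exp (- y\<^sup>2 / t) * (1 + a1 * t / (a2 * r) * exp (- (1/r - 1/t) * y\<^sup>2))"
    using assms by (simp add: field_simps)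
  have "1 + a1 * t / (a2 * r) * exp (- (1/r - 1/t) * y\<^sup>2) > 0"
    using assms by (intro add_pos_pos) auto
  moreover have "a2 / t > 0"
    using assms by simp
  ultimately have "ln (a2 / t * exp (- y\<^sup>2 / t) * (1 + a1 * t / (a2 * r) * exp (- (1/r - 1/t) * y\<^sup>2)))
      = ln (a2 / t) + ln (exp (- y\<^sup>2 / t)) + ln (1 + a1 * t / (a2 * r) * exp (- (1/r - 1/t) * y\<^sup>2))"
    by (simp only: ln_mult_pos mult_pos_pos exp_gt_zero)
  then show ?thesis
    unfolding mixture ln_exp by simp
qed

lemma J_fun_eq_integral:
  fixes \<sigma>2 a1 a2 x2 x s t c \<alpha> :: real
  assumes "\<sigma>2 > 0" "x2 > 0" "a1 > 0" "a2 > 0"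
    and s: "s = x\<^sup>2 + \<sigma>2" and t: "t = x2\<^sup>2 + \<sigma>2" and c: "c = a1 * t / (a2 * \<sigma>2)"
    and \<alpha>: "\<alpha> = x2\<^sup>2 / t * (s / \<sigma>2)"
  shows "J_fun \<sigma>2 a1 a2 x2 x = - s / t + ln (a2 / t) + ln (1 + c)
           - c * integral {0..1} (\<lambda>v. v powr (1/\<alpha>) / (1 + c * v))"
proof -
  have pos: "s > 0" "t > 0" "c > 0" "\<alpha> > 0"
    using assms by (auto simp: add_nonneg_pos)
  have "\<alpha> / s = x2\<^sup>2 / (t * \<sigma>2)"
    using pos(1) unfolding \<alpha> by simp
  also have "\<dots> = 1/\<sigma>2 - 1/t"
    using pos(2) assms(1) unfolding t by (simp add: field_simps)
  finally have "1/\<sigma>2 - 1/t = \<alpha> / s" ..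
  then have ln_eq: "ln (a1 / \<sigma>2 * exp (- y\<^sup>2 / \<sigma>2) + a2 / t * exp (- y\<^sup>2 / t))
      = ln (a2 / t) - y\<^sup>2 / t + ln (1 + c * exp (-\<alpha> * y\<^sup>2 / s))" for y
    using ln_two_gaussian_mixture[of a1 a2 \<sigma>2 t y] pos assms(1,3,4) unfolding c by simp
  have integrand: "2 * y / (x\<^sup>2 + \<sigma>2) * exp (- y\<^sup>2 / (x\<^sup>2 + \<sigma>2)) *
        ln (a1 / \<sigma>2 * exp (- y\<^sup>2 / \<sigma>2) + a2 / (x2\<^sup>2 + \<sigma>2) * exp (- y\<^sup>2 / (x2\<^sup>2 + \<sigma>2)))
      = ln (a2 / t) * rayleigh_density s y - rayleigh_density s y * y\<^sup>2 / t
        + rayleigh_density s y * ln (1 + c * exp (-\<alpha> * y\<^sup>2 / s))" for y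
    unfolding s[symmetric] t[symmetric] ln_eq rayleigh_density_def by (simp add: algebra_simps)
  note I1 = rayleigh_density_integral[OF pos(1)]
    and I2 = rayleigh_second_moment[OF pos(1)]
    and I3 = rayleigh_ln_one_plus_integral[OF pos(1,3,4)]
  have "J_fun \<sigma>2 a1 a2 x2 x
      = (LBINT y:{0..}. ln (a2 / t) * rayleigh_density s y - rayleigh_density s y * y\<^sup>2 / t
          + rayleigh_density s y * ln (1 + c * exp (-\<alpha> * y\<^sup>2 / s)))"
    unfolding J_fun_def integrand ..
  also have "\<dots> = ln (a2 / t) * (LBINT y:{0..}. rayleigh_density s y)
      - (LBINT y:{0..}. rayleigh_density s y * y\<^sup>2) / t
      + (LBINT y:{0..}. rayleigh_density s y * ln (1 + c * exp (-\<alpha> * y\<^sup>2 / s)))"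
    using I1(1) I2(1) I3(1) by (simp add: set_integral_add set_integral_diff set_integrable_divide)
  finally show ?thesis
    unfolding I1(2) I2(2) I3(2) by simp
qed

lemma slit_plane_eq: "slit_plane = - (complex_of_real ` {1..})"
  by (auto simp: slit_plane_def)

lemma open_slit_plane: "open slit_plane"
  unfolding slit_plane_eq by (intro open_Compl closed_slot_right)

lemma connected_slit_plane: "connected slit_plane"
  unfolding slit_plane_eq by (intro starlike_imp_connected starlike_slotted_complex_plane_right)

lemma ball_0_1_subset_slit_plane: "ball 0 1 \<subseteq> slit_plane"
  unfolding slit_plane_eq complex_slot_right_eq
  by (auto simp: dist_norm) (smt (verit) abs_Re_le_cmod)

lemma slit_plane_one_minus_mult_of_real_neq_0:
  assumes "z \<in> slit_plane" "0 \<le> v" "v \<le> 1"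
  shows "1 - z * complex_of_real v \<noteq> 0"
proof
  assume eq: "1 - z * complex_of_real v = 0"
  then have "v \<noteq> 0"
    by auto
  with eq have "z = complex_of_real (1 / v)"
    by (simp add: field_simps)
  moreover have "1 / v \<ge> 1"
    using assms(2,3) \<open>v \<noteq> 0\<close> by (simp add: field_simps)
  ultimately show False
    using assms(1) unfolding slit_plane_eq by blast
qed

lemma hyp2F1_eqI:
  assumes holo: "f holomorphic_on slit_plane"
    and series: "\<And>u. norm u < 1 \<Longrightarrow> f u = hyp2F1_series a b c u"
    and z: "z \<in> slit_plane"
  shows "hyp2F1 a b c z = f z"
  unfolding hyp2F1_def
proof (rule the_equality)
  show "\<exists>g. g holomorphic_on slit_plane \<and> (\<forall>u. norm u < 1 \<longrightarrow> g u = hyp2F1_series a b c u) \<and> g z = f z"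
    using holo series by blast
next
  fix w
  assume "\<exists>g. g holomorphic_on slit_plane \<and> (\<forall>u. norm u < 1 \<longrightarrow> g u = hyp2F1_series a b c u) \<and> g z = w"
  then obtain g where g: "g holomorphic_on slit_plane" "\<And>u. norm u < 1 \<Longrightarrow> g u = hyp2F1_series a b c u"
    and "g z = w"
    by blast
  have "g z - f z = 0"
  proof (rule analytic_continuation[of "\<lambda>z. g z - f z" slit_plane "ball 0 1" 0])
    show "(\<lambda>z. g z - f z) holomorphic_on slit_plane"
      by (intro holomorphic_on_diff g(1) holo)
    show "\<And>u. u \<in> ball 0 1 \<Longrightarrow> g u - f u = 0"
      using g(2) series by simp
  qed (use open_slit_plane connected_slit_plane ball_0_1_subset_slit_plane z in auto)
  then show "w = f z"
    using \<open>g z = w\<close> by simp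
qed

lemma holomorphic_on_integral_slit_plane_kernel:
  fixes g :: "real \<Rightarrow> complex"
  assumes g: "continuous_on {0..1} g"
  shows "(\<lambda>z. integral {0..1} (\<lambda>v. g v / (1 - z * complex_of_real v))) holomorphic_on slit_plane"
  unfolding holomorphic_on_def
proof
  fix z0 assume "z0 \<in> slit_plane"
  \<comment> \<open>Leibniz's rule needs a convex domain, so it is applied on a ball around \<open>z0\<close>.\<close>
  then obtain r where r: "r > 0" "ball z0 r \<subseteq> slit_plane"
    using open_slit_plane openE by blast
  have nonzero: "1 - z * complex_of_real v \<noteq> 0" if "z \<in> ball z0 r" "v \<in> cbox 0 1" for z v
    using slit_plane_one_minus_mult_of_real_neq_0[of z v] r that by auto
  have "(\<lambda>z. integral (cbox 0 1) (\<lambda>v. g v / (1 - z * complex_of_real v))) holomorphic_on ball z0 r"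
  proof (rule leibniz_rule_holomorphic[where fx = "\<lambda>z v. g v * complex_of_real v / (1 - z * complex_of_real v)\<^sup>2"])
    show "((\<lambda>z. g v / (1 - z * complex_of_real v)) has_field_derivative
        g v * complex_of_real v / (1 - z * complex_of_real v)\<^sup>2) (at z within ball z0 r)"
      if "z \<in> ball z0 r" "v \<in> cbox 0 1" for z v
      using nonzero[OF that] by (auto intro!: derivative_eq_intros simp: power2_eq_square field_simps)
    show "(\<lambda>v. g v / (1 - z * complex_of_real v)) integrable_on cbox 0 1" if "z \<in> ball z0 r" for z
      using nonzero[OF that] unfolding cbox_interval
      by (intro integrable_continuous_real continuous_intros g) auto
    have "continuous_on (ball z0 r \<times> cbox 0 1) (\<lambda>u. g (snd u) * complex_of_real (snd u) / (1 - fst u * complex_of_real (snd u))\<^sup>2)"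
      using nonzero
      by (intro continuous_intros continuous_on_compose2[OF g]) (auto simp: mem_Times_iff)
    then show "continuous_on (ball z0 r \<times> cbox 0 1)
        (\<lambda>(z, v). g v * complex_of_real v / (1 - z * complex_of_real v)\<^sup>2)"
      by (simp add: case_prod_beta')
  qed auto
  then show "(\<lambda>z. integral {0..1} (\<lambda>v. g v / (1 - z * complex_of_real v))) field_differentiable at z0 within slit_plane"
    using holomorphic_on_imp_differentiable_at[OF _ open_ball] r(1)
    by (auto intro: field_differentiable_at_within)
qed

lemma uniform_limit_geometric_kernel:
  fixes g :: "real \<Rightarrow> complex" and u :: complex
  assumes g: "continuous_on {0..1} g" and u: "norm u < 1"
  shows "uniform_limit {0..1} (\<lambda>n v. \<Sum>k<n. g v * (u * complex_of_real v) ^ k)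
           (\<lambda>v. g v / (1 - u * complex_of_real v)) sequentially"
proof -
  obtain B where B: "\<And>v. v \<in> {0..1} \<Longrightarrow> norm (g v) \<le> B"
    using compact_imp_bounded[OF compact_continuous_image[OF g compact_Icc]]
    unfolding bounded_iff by fastforce
  have small: "norm (u * complex_of_real v) \<le> norm u" if "v \<in> {0..1}" for v
    using that by (auto simp: norm_mult mult_left_le)
  have "norm (g v * (u * complex_of_real v) ^ k) \<le> B * norm u ^ k" if "v \<in> {0..1}" for k v
    unfolding norm_mult[of "g v"] norm_power using B[OF that] small[OF that]
    by (intro mult_mono power_mono) (auto intro: order_trans[OF norm_ge_zero])
  then have "uniform_limit {0..1} (\<lambda>n v. \<Sum>k<n. g v * (u * complex_of_real v) ^ k)
      (\<lambda>v. \<Sum>k. g v * (u * complex_of_real v) ^ k) sequentially"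
    using u by (intro Weierstrass_m_test summable_mult summable_geometric) auto
  moreover have "(\<Sum>k. g v * (u * complex_of_real v) ^ k) = g v / (1 - u * complex_of_real v)"
    if "v \<in> {0..1}" for v
    using le_less_trans[OF small[OF that] u]
    by (simp add: suminf_mult suminf_geometric summable_geometric divide_inverse)
  ultimately show ?thesis
    by (subst (asm) uniform_limit_cong'[OF refl]) auto
qed

lemma sums_integral_geometric_kernel:
  fixes g :: "real \<Rightarrow> complex" and u :: complex
  assumes g: "continuous_on {0..1} g" and u: "norm u < 1"
  shows "(\<lambda>k. u ^ k * integral {0..1} (\<lambda>v. g v * complex_of_real v ^ k))
           sums integral {0..1} (\<lambda>v. g v / (1 - u * complex_of_real v))"
proof -
  have "continuous_on {0..1} (\<lambda>v. \<Sum>k<n. g v * (u * complex_of_real v) ^ k)" for n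
    by (intro continuous_intros g)
  with uniform_limit_geometric_kernel[OF g u] obtain I J where
    I: "\<And>n. ((\<lambda>v. \<Sum>k<n. g v * (u * complex_of_real v) ^ k) has_integral I n) {0..1}" and
    J: "((\<lambda>v. g v / (1 - u * complex_of_real v)) has_integral J) {0..1}" and
    "I \<longlonglongrightarrow> J"
    by (rule uniform_limit_integral) auto
  have "((\<lambda>v. u ^ k * (g v * complex_of_real v ^ k)) has_integral
      u ^ k * integral {0..1} (\<lambda>v. g v * complex_of_real v ^ k)) {0..1}" for k
    by (intro has_integral_mult_right integrable_integral integrable_continuous_real continuous_intros g)
  then have "((\<lambda>v. \<Sum>k<n. g v * (u * complex_of_real v) ^ k) has_integral
      (\<Sum>k<n. u ^ k * integral {0..1} (\<lambda>v. g v * complex_of_real v ^ k))) {0..1}" for n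
    by (intro has_integral_sum) (auto simp: power_mult_distrib mult.left_commute)
  then have "I = (\<lambda>n. \<Sum>k<n. u ^ k * integral {0..1} (\<lambda>v. g v * complex_of_real v ^ k))"
    using has_integral_unique[OF I] by blast
  with \<open>I \<longlonglongrightarrow> J\<close> integral_unique[OF J] show ?thesis
    by (simp add: sums_def)
qed

lemma has_integral_powr_times_power:
  assumes "p > -1"
  shows "((\<lambda>v. v powr p * v ^ k) has_integral 1 / (p + real k + 1)) {0..1}"
proof -
  have "((\<lambda>v. v powr (p + real k)) has_integral 1 / (p + real k + 1)) {0..1}"
    using has_integral_powr_from_0[of "p + real k" 1] assms by simp
  then show ?thesis
    by (rule has_integral_eq[rotated]) (auto simp: powr_add powr_realpow le_less)
qed

lemma pochhammer_div_pochhammer_add_1: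
  fixes b :: "'a::field_char_0"
  assumes "b \<notin> \<int>\<^sub>\<le>\<^sub>0"
  shows "pochhammer b k / pochhammer (b + 1) k = b / (b + of_nat k)"
proof -
  have nonzero: "b + of_nat j \<noteq> 0" for j
    using assms by (metis eq_neg_iff_add_eq_0 minus_of_nat_in_nonpos_Ints)
  have "b + 1 \<noteq> - of_nat j" for j
    using nonzero[of "Suc j"] by (simp add: eq_neg_iff_add_eq_0 add.assoc)
  then have "pochhammer (b + 1) k \<noteq> 0"
    by (simp add: pochhammer_eq_0_iff)
  moreover note nonzero[of k]
  moreover have "b * pochhammer (b + 1) k = (b + of_nat k) * pochhammer b k"
    using pochhammer_rec[of b k] pochhammer_rec'[of b k] by simp
  ultimately show ?thesis
    by (simp add: field_simps)
qed

lemma continuous_on_of_real_powr_const: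
  "p > 0 \<Longrightarrow> continuous_on {0..b} (\<lambda>v. complex_of_real (v powr p))"
  by (intro continuous_on_of_real continuous_on_powr_const)

lemma hyp2F1_series_1_b_b_plus_1_integral:
  fixes b :: real and u :: complex
  assumes b: "b > 1" and u: "norm u < 1"
  shows "hyp2F1_series 1 (complex_of_real b) (complex_of_real b + 1) u
       = complex_of_real b * integral {0..1} (\<lambda>v. complex_of_real (v powr (b - 1)) / (1 - u * complex_of_real v))"
proof -
  define B where "B = complex_of_real b"
  have moment: "integral {0..1} (\<lambda>v. complex_of_real (v powr (b - 1)) * complex_of_real v ^ k)
      = complex_of_real (1 / (b + real k))" for k
  proof (rule integral_unique)
    show "((\<lambda>v. complex_of_real (v powr (b - 1)) * complex_of_real v ^ k) has_integral
        complex_of_real (1 / (b + real k))) {0..1}"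
      using has_integral_of_real[OF has_integral_powr_times_power[of "b - 1" k], where 'b=complex] b
      by simp
  qed
  have "B \<notin> \<int>\<^sub>\<le>\<^sub>0"
    using b by (auto simp: B_def of_real_in_nonpos_Ints_iff)
  then have series_term: "pochhammer 1 k * pochhammer B k / pochhammer (B + 1) k * u ^ k / of_nat (fact k)
      = B * (u ^ k * integral {0..1} (\<lambda>v. complex_of_real (v powr (b - 1)) * complex_of_real v ^ k))" for k
  proof -
    have "pochhammer 1 k * pochhammer B k / pochhammer (B + 1) k * u ^ k / of_nat (fact k)
        = pochhammer B k / pochhammer (B + 1) k * u ^ k"
      by (simp add: pochhammer_fact[symmetric])
    also have "\<dots> = B / (B + of_nat k) * u ^ k"
      using \<open>B \<notin> \<int>\<^sub>\<le>\<^sub>0\<close> by (simp add: pochhammer_div_pochhammer_add_1)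
    finally show ?thesis
      unfolding moment by (simp add: B_def field_simps)
  qed
  have "(\<lambda>k. u ^ k * integral {0..1} (\<lambda>v. complex_of_real (v powr (b - 1)) * complex_of_real v ^ k))
      sums integral {0..1} (\<lambda>v. complex_of_real (v powr (b - 1)) / (1 - u * complex_of_real v))"
    using b u by (intro sums_integral_geometric_kernel continuous_on_of_real_powr_const) auto
  from sums_mult[OF this, of B] show ?thesis
    unfolding hyp2F1_series_def B_def[symmetric] series_term by (simp add: sums_iff)
qed

text \<open>The identity holds for \<open>b > 0\<close>; \<open>b > 1\<close> keeps the kernel \<open>v powr (b - 1)\<close> continuous at 0,
  where \<open>0 powr 0 = 0\<close>.\<close>
lemma hyp2F1_1_b_b_plus_1_integral:
  fixes b :: real
  assumes "b > 1" and "z \<in> slit_plane"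
  shows "hyp2F1 1 (complex_of_real b) (complex_of_real b + 1) z
       = complex_of_real b * integral {0..1} (\<lambda>v. complex_of_real (v powr (b - 1)) / (1 - z * complex_of_real v))"
  using assms
  by (intro hyp2F1_eqI holomorphic_on_mult holomorphic_on_const hyp2F1_series_1_b_b_plus_1_integral[symmetric]
      holomorphic_on_integral_slit_plane_kernel continuous_on_of_real_powr_const) auto

lemma integral_of_real:
  "f integrable_on S \<Longrightarrow> integral S (\<lambda>x. of_real (f x) :: 'b::real_normed_algebra_1) = of_real (integral S f)"
  by (intro integral_unique has_integral_of_real integrable_integral)

lemma hyp2F1_1_b_b_plus_1_neg_real:
  fixes b c :: real
  assumes "b > 1" and "c > 0"
  shows "hyp2F1 1 (complex_of_real b) (complex_of_real b + 1) (complex_of_real (- c))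
       = complex_of_real (b * integral {0..1} (\<lambda>v. v powr (b - 1) / (1 + c * v)))"
proof -
  have "(\<lambda>v. v powr (b - 1) / (1 + c * v)) integrable_on {0..1}"
    using assms by (intro integrable_continuous_real continuous_on_powr_div_one_plus_mult) auto
  moreover have "complex_of_real (- c) \<in> slit_plane"
    using assms by (auto simp: slit_plane_eq)
  ultimately show ?thesis
    using assms by (simp add: hyp2F1_1_b_b_plus_1_integral integral_of_real[symmetric])
qed

theorem mainTheorem4:
  fixes \<sigma>2 x2 x a1 a2 \<alpha> \<beta> :: real
  assumes "\<sigma>2 > 0" and "x2 > 0" and "x \<ge> 0"
    and "0 < a1" and "a1 < 1" and "0 < a2" and "a2 < 1" and "a1 + a2 = 1"
    and "\<alpha> = x2\<^sup>2 / (x2\<^sup>2 + \<sigma>2) * ((x\<^sup>2 + \<sigma>2) / \<sigma>2)"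
    and "\<beta> = a2 / a1 * (\<sigma>2 / (x2\<^sup>2 + \<sigma>2))"
  shows "complex_of_real (J_fun \<sigma>2 a1 a2 x2 x) =
           complex_of_real (- (x\<^sup>2 + \<sigma>2) / (x2\<^sup>2 + \<sigma>2) + ln (a2 / (x2\<^sup>2 + \<sigma>2))
                            + ln (1 + inverse \<beta>))
           - complex_of_real (\<alpha> * inverse \<beta> / (\<alpha> + 1))
             * hyp2F1 1 (complex_of_real ((\<alpha> + 1) / \<alpha>)) (complex_of_real ((2 * \<alpha> + 1) / \<alpha>))
                 (complex_of_real (- inverse \<beta>))"
proof -
  define c where "c = inverse \<beta>"
  define b where "b = (\<alpha> + 1) / \<alpha>"
  define I where "I = integral {0..1} (\<lambda>v. v powr (b - 1) / (1 + c * v))"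
  have "\<alpha> > 0" "c > 0"
    using assms by (auto simp: c_def add_nonneg_pos)
  then have b: "b > 1" "b - 1 = 1 / \<alpha>" "\<alpha> * c / (\<alpha> + 1) * b = c"
    "complex_of_real ((2 * \<alpha> + 1) / \<alpha>) = complex_of_real b + 1"
    by (simp_all add: b_def) (simp_all add: field_simps)
  have "J_fun \<sigma>2 a1 a2 x2 x = - (x\<^sup>2 + \<sigma>2) / (x2\<^sup>2 + \<sigma>2) + ln (a2 / (x2\<^sup>2 + \<sigma>2)) + ln (1 + c) - c * I"
    using assms unfolding I_def b(2) by (intro J_fun_eq_integral) (auto simp: c_def field_simps)
  moreover have "hyp2F1 1 (complex_of_real b) (complex_of_real b + 1) (complex_of_real (- c))
      = complex_of_real (b * I)"
    unfolding I_def using b(1) \<open>c > 0\<close> by (rule hyp2F1_1_b_b_plus_1_neg_real)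
  moreover have "complex_of_real (\<alpha> * c / (\<alpha> + 1)) * complex_of_real (b * I) = complex_of_real (c * I)"
    using b(3) by (metis of_real_mult mult.assoc)
  ultimately show ?thesis
    unfolding c_def[symmetric] b_def[symmetric] b(4) by simp
qed

end
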